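(* Let $A\in\mathbb R^{n\times n}$ be symmetric, $C\in\mathbb R^{n\times n}$ symmetric positive semidefinite, $\xi\sim N(0,C)$. For every integer $N\ge1$, \[ \mathbf E\big(\langle\xi,A\xi\rangle-R_1\big)^N=\sum_{m=1}^N 2^{N-m}\sum_{\mathbf k\in J_0(m,N)}R^{\mathbf k}\,c(\mathbf k). \]
   Context: $R_j=\mathrm{Tr}\,(AC)^j$ (so $R_1=\mathbf E\langle\xi,A\xi\rangle$); for $\mathbf k=(\mathbf k_1,\dots,\mathbf k_m)$, $R^{\mathbf k}=\prod_{j=1}^m R_{\mathbf k_j}$ and $s_j(\mathbf k)=\mathbf k_1+\dots+\mathbf k_j$ ($s_0=0$). $J_0(m,N)$ is the set of $\mathbf k\in\{1,2,\dots\}^m$ with $s_m(\mathbf k)=N$ and no entry equal to $1$. For $\mathbf k\in J_0(m,N)$, $c(\mathbf k)=\dfrac{(N-1)!}{\prod_{j=2}^{m}\big(N-s_{j-1}(\mathbf k)\big)}$ (empty product $=1$). *)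

theory Defs
  imports "HOL-Probability.Probability"
begin

fun mat_pow :: "real^'n^'n \<Rightarrow> nat \<Rightarrow> real^'n^'n" where
  "mat_pow M 0 = mat 1"
| "mat_pow M (Suc j) = M ** mat_pow M j"

definition R :: "real^'n^'n \<Rightarrow> real^'n^'n \<Rightarrow> nat \<Rightarrow> real" where
  "R A C j = trace (mat_pow (A ** C) j)"

definition psd :: "real^'n^'n \<Rightarrow> bool" where
  "psd C \<longleftrightarrow> transpose C = C \<and> (\<forall>x. 0 \<le> x \<bullet> (C *v x))"

(* xi is a centred Gaussian random vector with covariance C: every linear functional
   u.xi is N(0, u^T C u) (degenerate = a.s. 0 when the variance vanishes) *)
definition gaussian_vec :: "'a measure \<Rightarrow> ('a \<Rightarrow> real^'n) \<Rightarrow> real^'n^'n \<Rightarrow> bool" where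
  "gaussian_vec M \<xi> C \<longleftrightarrow> prob_space M \<and> \<xi> \<in> borel_measurable M \<and>
     (\<forall>u. (u \<bullet> (C *v u) > 0 \<longrightarrow>
              distributed M lborel (\<lambda>\<omega>. u \<bullet> \<xi> \<omega>) (normal_density 0 (sqrt (u \<bullet> (C *v u)))))
         \<and> (u \<bullet> (C *v u) = 0 \<longrightarrow> (AE \<omega> in M. u \<bullet> \<xi> \<omega> = 0)))"

(* J_0(m,N): compositions of N into m parts, each part \<ge> 2 (entries k_1..k_m = k!0..k!(m-1)) *)
definition J0 :: "nat \<Rightarrow> nat \<Rightarrow> nat list set" where
  "J0 m N = {k. length k = m \<and> (\<forall>x\<in>set k. 2 \<le> x) \<and> sum_list k = N}"

definition psum :: "nat list \<Rightarrow> nat \<Rightarrow> nat" where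
  "psum k j = sum_list (take j k)"

definition cc :: "nat \<Rightarrow> nat list \<Rightarrow> real" where
  "cc N k = fact (N - 1) / (\<Prod>j\<in>{2..length k}. (real N - real (psum k (j - 1))))"

definition Rk :: "real^'n^'n \<Rightarrow> real^'n^'n \<Rightarrow> nat list \<Rightarrow> real" where
  "Rk A C k = (\<Prod>j<length k. R A C (k ! j))"

end

theory Submission
  imports Defs
begin

text \<open>Gaussian integration by parts, \<open>E ((v \<bullet> \<xi>) p \<xi>) = E (D\<^bsub>C v\<^esub> p \<xi>)\<close> for polynomials \<open>p\<close>,
  is first obtained for \<open>p x = (w \<bullet> x)\<^sup>m\<close> by differentiating the one-dimensional moments
  \<open>E ((w + t v) \<bullet> \<xi>)\<^bsup>m+1\<^esup>\<close> in \<open>t\<close>, and then for every product of linear forms by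
  polarisation: such a product is an iterated finite difference of \<open>w \<mapsto> (w \<bullet> x)\<^sup>m\<close>.
  Applied to each coordinate of \<open>\<xi> \<bullet> (B *v \<xi>)\<close>, with \<open>Q = \<xi> \<bullet> (A *v \<xi>) - R\<^sub>1\<close>, it gives
  \<open>E (\<xi> \<bullet> (B *v \<xi>)) Q\<^sup>k = tr (BC) E Q\<^sup>k + 2k E (\<xi> \<bullet> (B\<^sup>T C A *v \<xi>)) Q\<^bsup>k-1\<^esup>\<close>.
  Iterating this with \<open>B = (AC)\<^sup>jA\<close> yields the recursion
  \<open>\<mu>\<^sub>k\<^sub>+\<^sub>1 = \<Sum>\<^sub>i\<^sub><\<^sub>k 2\<^bsup>i+1\<^esup> k!/(k-1-i)! R\<^sub>i\<^sub>+\<^sub>2 \<mu>\<^sub>k\<^sub>-\<^sub>1\<^sub>-\<^sub>i\<close> for the central moments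
  \<open>\<mu>\<^sub>k = E Q\<^sup>k\<close>; splitting off the first part of a composition shows that the right-hand side of
  the formula satisfies the same recursion.\<close>

section \<open>Iterated finite differences\<close>

fun fdiff :: "('a::ab_group_add \<Rightarrow> 'b::ab_group_add) \<Rightarrow> 'a \<Rightarrow> 'a list \<Rightarrow> 'b" where
  "fdiff f c [] = f c"
| "fdiff f c (y # ys) = fdiff f (c + y) ys - fdiff f c ys"

lemma fdiff_translate: "fdiff (\<lambda>z. f (y + z)) c ys = fdiff f (y + c) ys"
  by (induct ys arbitrary: c) (simp_all add: add_ac)

lemma fdiff_Cons_translate: "fdiff f c (y # ys) = fdiff (\<lambda>z. f (y + z)) c ys - fdiff f c ys"
  by (simp add: fdiff_translate add.commute[of c y])

lemma fdiff_comp_additive: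
  assumes "\<And>a b. L (a + b) = L a + L b"
  shows "fdiff (\<lambda>w. f (L w)) c ys = fdiff f (L c) (map L ys)"
  by (induct ys arbitrary: c) (simp_all add: assms)

lemma fdiff_sum: "fdiff (\<lambda>z. \<Sum>j\<in>J. g j z) c ys = (\<Sum>j\<in>J. fdiff (g j) c ys)"
  by (induct ys arbitrary: c) (simp_all add: sum_subtractf)

lemma fdiff_add: "fdiff (\<lambda>z. f z + g z) c ys = fdiff f c ys + fdiff g c ys"
  by (induct ys arbitrary: c) simp_all

lemma fdiff_mult_left: "fdiff (\<lambda>z. a * f z) c ys = (a :: 'b::ring) * fdiff f c ys"
  by (induct ys arbitrary: c) (simp_all add: right_diff_distrib)

lemma fdiff_const_Cons: "fdiff (\<lambda>z. a) c (y # ys) = 0"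
proof -
  have "fdiff (\<lambda>z. a) c ys = (if ys = [] then a else 0)" for c by (induct ys arbitrary: c) auto
  then show ?thesis by simp
qed

lemma fdiff_binomial:
  fixes y :: "'b::comm_ring_1"
  shows "fdiff (\<lambda>z. g z * (y + h z) ^ k) c ys
     = (\<Sum>j\<le>k. of_nat (k choose j) * y ^ j * fdiff (\<lambda>z. g z * h z ^ (k - j)) c ys)"
proof -
  have "g z * (y + h z) ^ k = (\<Sum>j\<le>k. of_nat (k choose j) * y ^ j * (g z * h z ^ (k - j)))" for z
    by (simp add: binomial_ring sum_distrib_left mult_ac)
  then show ?thesis by (simp add: fdiff_sum fdiff_mult_left)
qed

text \<open>In the binomial expansion of the first step of a difference, only the terms with
  \<open>j = 0\<close> (which cancels) and \<open>j = 1\<close> survive the remaining steps.\<close>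

lemma binomial_sum_first_order:
  fixes y :: "'a::comm_ring_1"
  assumes "\<And>j. j \<le> k \<Longrightarrow> F (k - j) = (if j = 0 \<and> P then V else 0)"
  shows "(\<Sum>j\<le>Suc k. of_nat (Suc k choose j) * y ^ j * F (Suc k - j))
     = F (Suc k) + (if P then of_nat (Suc k) * y * V else 0)"
proof -
  have "(\<Sum>j\<le>k. of_nat (Suc k choose Suc j) * y ^ Suc j * F (k - j))
      = (\<Sum>j\<le>k. if j = 0 then (if P then of_nat (Suc k) * y * V else 0) else 0)"
    by (intro sum.cong refl) (auto simp: assms)
  then show ?thesis by (subst sum.atMost_Suc_shift) simp
qed

lemma fdiff_power:
  fixes c :: "'a::{comm_ring_1, semiring_char_0}"
  assumes "k \<le> length ys"
  shows "fdiff (\<lambda>z. z ^ k) c ys = (if k = length ys then fact k * prod_list ys else 0)"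
  using assms
proof (induct ys arbitrary: k)
  case (Cons y ys)
  show ?case
  proof (cases k)
    case 0
    then show ?thesis using fdiff_const_Cons[of 1] by simp
  next
    case (Suc k')
    have "fdiff (\<lambda>z. z ^ k) c (y # ys) = fdiff (\<lambda>z. (y + z) ^ k) c ys - fdiff (\<lambda>z. z ^ k) c ys"
      by (rule fdiff_Cons_translate)
    also have "fdiff (\<lambda>z. (y + z) ^ k) c ys
        = (\<Sum>j\<le>k. of_nat (k choose j) * y ^ j * fdiff (\<lambda>z. z ^ (k - j)) c ys)"
      using fdiff_binomial[of "\<lambda>_. 1" y id k c ys] by simp
    also have "\<dots> = fdiff (\<lambda>z. z ^ k) c ys
        + (if k' = length ys then of_nat k * y * (fact k' * prod_list ys) else 0)"
      unfolding Suc using Cons Suc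
      by (intro binomial_sum_first_order[where F = "\<lambda>i. fdiff (\<lambda>z. z ^ i) c ys"]) auto
    finally show ?thesis using Suc by (simp add: mult_ac)
  qed
qed simp

text \<open>\<open>prod_deriv L\<close> is the derivative at \<open>0\<close> of \<open>\<epsilon> \<mapsto> \<Prod>(a, y)\<leftarrow>L. y + \<epsilon> * a\<close>.\<close>

fun prod_deriv :: "('a::comm_ring_1 \<times> 'a) list \<Rightarrow> 'a" where
  "prod_deriv [] = 0"
| "prod_deriv (p # L) = fst p * prod_list (map snd L) + snd p * prod_deriv L"

lemma fdiff_mult_power:
  fixes L :: "('a::{comm_ring_1, semiring_char_0} \<times> 'a) list"
  assumes "Suc k \<le> length L"
  shows "fdiff (\<lambda>p. fst p * snd p ^ k) c L = (if Suc k = length L then fact k * prod_deriv L else 0)"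
  using assms
proof (induct L arbitrary: k)
  case (Cons p L)
  obtain d0 y0 where p: "p = (d0, y0)" by force
  have k: "k \<le> length L" using Cons.prems by simp
  have "fdiff (\<lambda>q. d0 * (y0 + snd q) ^ k) c L
      = d0 * (if k = length L then fact k * prod_list (map snd L) else 0)"
    using fdiff_comp_additive[of snd "\<lambda>z. (y0 + z) ^ k" c L] fdiff_power[OF k[folded length_map[of snd]]]
    by (simp add: fdiff_mult_left fdiff_translate[of "\<lambda>z. z ^ k" y0])
  moreover have "fdiff (\<lambda>q. fst q * (y0 + snd q) ^ k) c L
      = fdiff (\<lambda>q. fst q * snd q ^ k) c L + (if k = length L then y0 * (fact k * prod_deriv L) else 0)"
  proof (cases k)
    case (Suc k')
    have "fdiff (\<lambda>q. fst q * (y0 + snd q) ^ k) c L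
        = (\<Sum>j\<le>k. of_nat (k choose j) * y0 ^ j * fdiff (\<lambda>q. fst q * snd q ^ (k - j)) c L)"
      by (rule fdiff_binomial)
    also have "\<dots> = fdiff (\<lambda>q. fst q * snd q ^ k) c L
        + (if k = length L then of_nat k * y0 * (fact k' * prod_deriv L) else 0)"
      unfolding Suc using Cons.hyps k Suc
      by (intro binomial_sum_first_order[where F = "\<lambda>i. fdiff (\<lambda>q. fst q * snd q ^ i) c L"]) auto
    also have "of_nat k * y0 * (fact k' * prod_deriv L) = y0 * (fact k * prod_deriv L)"
      by (simp add: Suc)
    finally show ?thesis .
  qed simp
  moreover have "fdiff (\<lambda>q. fst q * snd q ^ k) c (p # L)
      = fdiff (\<lambda>q. d0 * (y0 + snd q) ^ k) c L + fdiff (\<lambda>q. fst q * (y0 + snd q) ^ k) c L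
        - fdiff (\<lambda>q. fst q * snd q ^ k) c L"
    by (simp add: fdiff_Cons_translate p distrib_right fdiff_add del: fdiff.simps(2))
  ultimately show ?case
    by (simp add: p algebra_simps)
qed simp

section \<open>Polynomials in linear forms\<close>

definition lf_monom :: "'v::real_inner list \<Rightarrow> 'v \<Rightarrow> real" where
  "lf_monom us x = (\<Prod>u\<leftarrow>us. u \<bullet> x)"

lemma lf_monom_simps [simp]:
  "lf_monom [] x = 1"
  "lf_monom (u # us) x = (u \<bullet> x) * lf_monom us x"
  "lf_monom (us @ vs) x = lf_monom us x * lf_monom vs x"
  by (simp_all add: lf_monom_def)

lemma lf_monom_replicate [simp]: "lf_monom (replicate i u) x = (u \<bullet> x) ^ i"
  by (induct i) auto

lemma fact_mult_lf_monom: "fact (length us) * lf_monom us x = fdiff (\<lambda>w. (w \<bullet> x) ^ length us) 0 us"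
  using fdiff_comp_additive[of "\<lambda>w. w \<bullet> x" "\<lambda>z. z ^ length us" 0 us]
    fdiff_power[of "length us" "map (\<lambda>u. u \<bullet> x) us" 0]
  by (simp add: inner_add_left lf_monom_def)

text \<open>Polynomials are kept as lists of terms \<open>(c, us)\<close> standing for \<open>c * lf_monom us\<close>, so that
  derivatives can be computed by structural recursion.\<close>

type_synonym 'v lf_poly = "(real \<times> 'v list) list"

definition lf_eval :: "'v::real_inner lf_poly \<Rightarrow> 'v \<Rightarrow> real" where
  "lf_eval P x = (\<Sum>(c, us)\<leftarrow>P. c * lf_monom us x)"

lemma lf_eval_simps [simp]:
  "lf_eval [] x = 0"
  "lf_eval ((c, us) # P) x = c * lf_monom us x + lf_eval P x"
  "lf_eval (P @ Q) x = lf_eval P x + lf_eval Q x"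
  by (simp_all add: lf_eval_def)

lemma lf_eval_map_scale: "lf_eval (map (\<lambda>(d, vs). (c * d, vs)) P) x = c * lf_eval P x"
  by (induct P) (auto simp: algebra_simps)

lemma lf_eval_map_Cons: "lf_eval (map (\<lambda>(c, vs). (c, u # vs)) P) x = (u \<bullet> x) * lf_eval P x"
  by (induct P) (auto simp: algebra_simps)

fun lf_monom_deriv :: "'v::real_inner \<Rightarrow> 'v list \<Rightarrow> 'v lf_poly" where
  "lf_monom_deriv h [] = []"
| "lf_monom_deriv h (u # us) = (u \<bullet> h, us) # map (\<lambda>(c, vs). (c, u # vs)) (lf_monom_deriv h us)"

lemma lf_eval_monom_deriv: "lf_eval (lf_monom_deriv h us) x = prod_deriv (map (\<lambda>u. (u \<bullet> h, u \<bullet> x)) us)"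
  by (induct us) (simp_all add: lf_eval_map_Cons lf_monom_def o_def)

lemma lf_eval_monom_deriv_append:
  "lf_eval (lf_monom_deriv h (us @ vs)) x
     = lf_eval (lf_monom_deriv h us) x * lf_monom vs x + lf_monom us x * lf_eval (lf_monom_deriv h vs) x"
  by (induct us) (simp_all add: lf_eval_map_Cons algebra_simps)

lemma fact_mult_lf_eval_monom_deriv:
  assumes "length us = Suc k"
  shows "fact k * lf_eval (lf_monom_deriv a us) x = fdiff (\<lambda>w. (a \<bullet> w) * (w \<bullet> x) ^ k) 0 us"
  using fdiff_comp_additive[of "\<lambda>w. (a \<bullet> w, w \<bullet> x)" "\<lambda>p. fst p * snd p ^ k" 0 us]
    fdiff_mult_power[of k "map (\<lambda>u. (a \<bullet> u, u \<bullet> x)) us" 0] assms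
  by (simp add: inner_add_left inner_add_right lf_eval_monom_deriv inner_commute[of a] zero_prod_def)

definition lf_deriv :: "'v::real_inner \<Rightarrow> 'v lf_poly \<Rightarrow> 'v lf_poly" where
  "lf_deriv h P = concat (map (\<lambda>(c, us). map (\<lambda>(d, vs). (c * d, vs)) (lf_monom_deriv h us)) P)"

lemma lf_deriv_simps [simp]:
  "lf_deriv h [] = []"
  "lf_deriv h ((c, us) # P) = map (\<lambda>(d, vs). (c * d, vs)) (lf_monom_deriv h us) @ lf_deriv h P"
  "lf_deriv h (P @ Q) = lf_deriv h P @ lf_deriv h Q"
  by (simp_all add: lf_deriv_def)

lemma lf_eval_deriv_Cons:
  "lf_eval (lf_deriv h ((c, us) # P)) x = c * lf_eval (lf_monom_deriv h us) x + lf_eval (lf_deriv h P) x"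
  by (simp add: lf_eval_map_scale)

definition lf_mult :: "'v lf_poly \<Rightarrow> 'v lf_poly \<Rightarrow> 'v lf_poly" where
  "lf_mult P Q = concat (map (\<lambda>(c, us). map (\<lambda>(d, vs). (c * d, us @ vs)) Q) P)"

lemma lf_mult_simps [simp]:
  "lf_mult [] Q = []"
  "lf_mult ((c, us) # P) Q = map (\<lambda>(d, vs). (c * d, us @ vs)) Q @ lf_mult P Q"
  by (simp_all add: lf_mult_def)

lemma lf_eval_map_mult_monom:
  "lf_eval (map (\<lambda>(d, vs). (c * d, us @ vs)) Q) x = c * lf_monom us x * lf_eval Q x"
  by (induct Q) (auto simp: algebra_simps)

lemma lf_eval_mult [simp]: "lf_eval (lf_mult P Q) x = lf_eval P x * lf_eval Q x"
  by (induct P) (auto simp: lf_eval_map_mult_monom algebra_simps)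

lemma lf_eval_deriv_map_mult_monom:
  "lf_eval (lf_deriv h (map (\<lambda>(d, vs). (c * d, us @ vs)) Q)) x
     = c * lf_eval (lf_monom_deriv h us) x * lf_eval Q x + c * lf_monom us x * lf_eval (lf_deriv h Q) x"
proof (induct Q)
  case (Cons q Q)
  obtain d vs where q: "q = (d, vs)" by force
  have "lf_eval (lf_deriv h (map (\<lambda>(d, vs). (c * d, us @ vs)) (q # Q))) x
      = (c * d) * lf_eval (lf_monom_deriv h (us @ vs)) x
        + lf_eval (lf_deriv h (map (\<lambda>(d, vs). (c * d, us @ vs)) Q)) x"
    by (simp add: q lf_eval_map_scale)
  moreover have "lf_eval (q # Q) x = d * lf_monom vs x + lf_eval Q x" by (simp add: q)
  moreover have "lf_eval (lf_deriv h (q # Q)) x = d * lf_eval (lf_monom_deriv h vs) x + lf_eval (lf_deriv h Q) x"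
    by (simp only: q lf_eval_deriv_Cons)
  ultimately show ?case unfolding lf_eval_monom_deriv_append Cons.hyps by (simp add: algebra_simps)
qed simp

lemma lf_eval_deriv_mult:
  "lf_eval (lf_deriv h (lf_mult P Q)) x
     = lf_eval (lf_deriv h P) x * lf_eval Q x + lf_eval P x * lf_eval (lf_deriv h Q) x"
  by (induct P) (auto simp: lf_eval_deriv_map_mult_monom lf_eval_map_scale algebra_simps)

fun lf_power :: "'v lf_poly \<Rightarrow> nat \<Rightarrow> 'v lf_poly" where
  "lf_power P 0 = [(1, [])]"
| "lf_power P (Suc k) = lf_mult P (lf_power P k)"

lemma lf_eval_power [simp]: "lf_eval (lf_power P k) x = lf_eval P x ^ k"
  by (induct k) auto

lemma lf_eval_deriv_power:
  "lf_eval (lf_deriv h (lf_power P k)) x = of_nat k * lf_eval P x ^ (k - 1) * lf_eval (lf_deriv h P) x"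
proof (induct k)
  case (Suc k)
  then show ?case by (cases k) (simp_all add: lf_eval_deriv_mult algebra_simps)
qed (simp add: lf_eval_map_scale)

definition univ_list :: "'a::finite list" where
  "univ_list = (SOME xs. distinct xs \<and> set xs = UNIV)"

lemma sum_list_map_univ_list:
  fixes f :: "'i::finite \<Rightarrow> 'a::comm_monoid_add"
  shows "(\<Sum>i\<leftarrow>univ_list. f i) = (\<Sum>i\<in>UNIV. f i)"
proof -
  have "\<exists>xs::'i list. distinct xs \<and> set xs = UNIV"
    using finite_distinct_list[of "UNIV :: 'i set"] by auto
  then have "distinct (univ_list :: 'i list) \<and> set (univ_list :: 'i list) = UNIV"
    unfolding univ_list_def by (rule someI_ex)
  then show ?thesis by (simp add: sum_list_distinct_conv_sum_set)
qed

definition lf_quadform :: "real^'n^'n \<Rightarrow> (real^'n) lf_poly" where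
  "lf_quadform B = map (\<lambda>i. (1, [axis i 1, B $ i])) univ_list"

lemma matrix_vector_mult_component: "(B *v x) $ i = B $ i \<bullet> (x :: real^'n)"
  by (simp add: matrix_vector_mult_def inner_vec_def mult_ac)

lemma lf_eval_quadform: "lf_eval (lf_quadform B) x = x \<bullet> (B *v x)"
proof -
  have "lf_eval (lf_quadform B) x = (\<Sum>i\<in>UNIV. (axis i 1 \<bullet> x) * (B $ i \<bullet> x))"
    by (simp add: lf_quadform_def lf_eval_def o_def sum_list_map_univ_list)
  also have "\<dots> = (\<Sum>i\<in>UNIV. x $ i * (B *v x) $ i)"
    by (simp add: inner_axis' matrix_vector_mult_component)
  finally show ?thesis by (simp add: inner_vec_def)
qed

lemma lf_eval_deriv_quadform: "lf_eval (lf_deriv h (lf_quadform B)) x = h \<bullet> (B *v x) + x \<bullet> (B *v h)"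
proof -
  have "lf_eval (lf_deriv h (map (\<lambda>i. (1, [axis i 1, B $ i])) is)) x
      = (\<Sum>i\<leftarrow>is. (axis i 1 \<bullet> h) * (B $ i \<bullet> x) + (B $ i \<bullet> h) * (axis i 1 \<bullet> x))" for "is"
    by (induct "is") (simp_all add: lf_eval_map_scale lf_eval_map_Cons)
  then have "lf_eval (lf_deriv h (lf_quadform B)) x
      = (\<Sum>i\<in>UNIV. (axis i 1 \<bullet> h) * (B $ i \<bullet> x) + (B $ i \<bullet> h) * (axis i 1 \<bullet> x))"
    by (simp add: lf_quadform_def sum_list_map_univ_list)
  also have "\<dots> = (\<Sum>i\<in>UNIV. h $ i * (B *v x) $ i) + (\<Sum>i\<in>UNIV. x $ i * (B *v h) $ i)"
    by (simp add: inner_axis' matrix_vector_mult_component sum.distrib mult_ac)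
  finally show ?thesis by (simp add: inner_vec_def)
qed

lemma inner_matrix_vector_transpose: "(B *v u) \<bullet> y = u \<bullet> (transpose B *v (y :: real^'n))"
  by (metis dot_lmul_matrix transpose_matrix_vector transpose_transpose)

lemma trace_mult_eq_sum_rows:
  "trace (B ** C) = (\<Sum>i\<in>UNIV. B $ i \<bullet> (C *v axis i (1 :: real)))"
  by (simp add: trace_def matrix_vector_mult_basis column_def inner_vec_def matrix_matrix_mult_def)

lemma sum_rows_mult_inner_columns:
  assumes "transpose C = C"
  shows "(\<Sum>i\<in>UNIV. (B $ i \<bullet> x) * ((C *v axis i 1) \<bullet> y)) = x \<bullet> ((transpose B ** C) *v (y :: real^'n))"
proof -
  have "(C *v axis i 1) \<bullet> y = (C *v y) $ i" for i
    using inner_matrix_vector_transpose[of C "axis i 1" y] assms by (simp add: inner_axis')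
  then have "(\<Sum>i\<in>UNIV. (B $ i \<bullet> x) * ((C *v axis i 1) \<bullet> y)) = (\<Sum>i\<in>UNIV. (B *v x) $ i * (C *v y) $ i)"
    by (simp only: matrix_vector_mult_component)
  also have "\<dots> = (B *v x) \<bullet> (C *v y)"
    by (simp add: inner_vec_def)
  finally show ?thesis
    by (simp add: inner_matrix_vector_transpose matrix_vector_mul_assoc)
qed

definition lf_quadform_shift :: "real^'n^'n \<Rightarrow> real \<Rightarrow> (real^'n) lf_poly" where
  "lf_quadform_shift A r = lf_quadform A @ [(- r, [])]"

lemma lf_eval_quadform_shift: "lf_eval (lf_quadform_shift A r) x = x \<bullet> (A *v x) - r"
  by (simp add: lf_quadform_shift_def lf_eval_quadform)

lemma lf_eval_deriv_quadform_shift_power: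
  assumes "transpose A = A"
  shows "lf_eval (lf_deriv h (lf_power (lf_quadform_shift A r) k)) x
     = of_nat k * (x \<bullet> (A *v x) - r) ^ (k - 1) * (2 * (h \<bullet> (A *v x)))"
proof -
  have "x \<bullet> (A *v h) = h \<bullet> (A *v x)"
    using inner_matrix_vector_transpose[of A h x] assms by (simp add: inner_commute)
  then show ?thesis
    by (simp add: lf_eval_deriv_power lf_eval_quadform_shift lf_quadform_shift_def
        lf_eval_deriv_quadform lf_eval_quadform lf_eval_map_scale)
qed

section \<open>Gaussian integration by parts\<close>

lemma integrable_fdiff:
  assumes "\<And>w. integrable M (F w)"
  shows "integrable M (\<lambda>\<omega>. fdiff (\<lambda>w. F w \<omega>) c us)"
  by (induct us arbitrary: c) (simp_all add: assms)

lemma integral_fdiff: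
  assumes "\<And>w. integrable M (F w)"
  shows "(\<integral>\<omega>. fdiff (\<lambda>w. F w \<omega>) c us \<partial>M) = fdiff (\<lambda>w. \<integral>\<omega>. F w \<omega> \<partial>M) c us"
  by (induct us arbitrary: c) (simp_all add: assms integrable_fdiff)

lemma sum_power_has_real_derivative_0:
  assumes "1 \<le> n"
  shows "((\<lambda>t. \<Sum>i\<le>n. c i * t ^ i) has_real_derivative c 1) (at 0)"
proof -
  have "((\<lambda>t. \<Sum>i\<le>n. c i * t ^ i) has_real_derivative (\<Sum>i\<le>n. of_nat i * 0 ^ (i - 1) * c i)) (at 0)"
    by (rule derivative_eq_intros refl | simp)+
  moreover have "(\<Sum>i\<le>n. of_nat i * (0::real) ^ (i - 1) * c i) = (\<Sum>i\<le>n. if i = 1 then c 1 else 0)"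
    by (intro sum.cong refl) auto
  ultimately show ?thesis using assms by simp
qed

text \<open>The \<open>k\<close>-th moment of the centred normal distribution with variance \<open>s\<close>.\<close>

definition gaussian_moment :: "nat \<Rightarrow> real \<Rightarrow> real" where
  "gaussian_moment k s =
     (if even k then fact k / (2 ^ (k div 2) * fact (k div 2)) * s ^ (k div 2) else 0)"

lemma gaussian_moment_Suc_Suc_deriv:
  "(gaussian_moment (Suc (Suc k)) has_real_derivative
      real ((k + 2) * (k + 1)) / 2 * gaussian_moment k s) (at s)"
proof (cases "even k")
  case True
  then obtain j where k: "k = 2 * j" by (auto elim: evenE)
  define c where "c = fact (2 * j + 2) / (2 ^ (j + 1) * fact (j + 1) :: real)"
  have "gaussian_moment (Suc (Suc k)) = (\<lambda>s. c * s ^ (j + 1))"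
    by (auto simp: gaussian_moment_def k c_def fun_eq_iff)
  moreover have "((\<lambda>s. c * s ^ (j + 1)) has_real_derivative c * (real (j + 1) * s ^ j)) (at s)"
    using DERIV_cmult[OF DERIV_pow, of c "j + 1" s] by simp
  moreover have "c * real (j + 1) = real ((k + 2) * (k + 1)) / 2 * (fact k / (2 ^ j * fact j))"
  proof -
    have "c = real ((k + 2) * (k + 1)) * fact k / (2 * 2 ^ j * (real (j + 1) * fact j))"
      unfolding c_def k by (simp add: numeral_2_eq_2 algebra_simps)
    moreover have "a * F / (2 * P * (y * G)) * y = a / 2 * (F / (P * G))"
      if "P \<noteq> 0" "G \<noteq> 0" "y \<noteq> 0" for a F P G y :: real
      using that by (simp add: field_simps)
    ultimately show ?thesis by simp
  qed
  ultimately show ?thesis by (simp add: gaussian_moment_def k mult.assoc[symmetric])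
next
  case False
  then have "gaussian_moment (Suc (Suc k)) = (\<lambda>s. 0)" by (simp add: gaussian_moment_def fun_eq_iff)
  then show ?thesis using False by (simp add: gaussian_moment_def)
qed

locale centred_gaussian =
  fixes M :: "'a measure" and \<xi> :: "'a \<Rightarrow> real^'n" and C :: "real^'n^'n"
  assumes gaussian: "gaussian_vec M \<xi> C" and psd: "psd C"
begin

sublocale prob_space M
  using gaussian by (simp add: gaussian_vec_def)

lemma measurable_xi [measurable]: "\<xi> \<in> borel_measurable M"
  using gaussian by (simp add: gaussian_vec_def)

lemma covariance_symmetric: "transpose C = C"
  using psd by (simp add: psd_def)

lemma inner_covariance_commute: "w \<bullet> (C *v v) = v \<bullet> (C *v w)"
proof -
  have "w \<bullet> (C *v v) = (transpose C *v w) \<bullet> v"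
    by (simp add: dot_lmul_matrix[symmetric])
  then show ?thesis by (simp add: covariance_symmetric inner_commute)
qed

lemma linear_form_moment:
  shows integrable_linear_form_power: "integrable M (\<lambda>\<omega>. (u \<bullet> \<xi> \<omega>) ^ k)"
    and expectation_linear_form_power:
      "expectation (\<lambda>\<omega>. (u \<bullet> \<xi> \<omega>) ^ k) = gaussian_moment k (u \<bullet> (C *v u))"
proof -
  have var_nonneg: "0 \<le> u \<bullet> (C *v u)" using psd by (simp add: psd_def)
  have "integrable M (\<lambda>\<omega>. (u \<bullet> \<xi> \<omega>) ^ k) \<and>
      expectation (\<lambda>\<omega>. (u \<bullet> \<xi> \<omega>) ^ k) = gaussian_moment k (u \<bullet> (C *v u))"
  proof (cases "u \<bullet> (C *v u) = 0")
    case True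
    then have "AE \<omega> in M. u \<bullet> \<xi> \<omega> = 0"
      using gaussian by (simp add: gaussian_vec_def)
    then have ae: "AE \<omega> in M. (u \<bullet> \<xi> \<omega>) ^ k = (0::real) ^ k"
      by eventually_elim simp
    have "(0::real) ^ k = gaussian_moment k 0"
      by (cases "k = 0") (auto simp: gaussian_moment_def zero_power elim!: evenE)
    then show ?thesis
      using True integrable_cong_AE[OF _ _ ae] integral_cong_AE[OF _ _ ae] by (simp add: prob_space)
  next
    case False
    define \<sigma> where "\<sigma> = sqrt (u \<bullet> (C *v u))"
    have \<sigma>: "0 < \<sigma>" "\<sigma>\<^sup>2 = u \<bullet> (C *v u)" using False var_nonneg by (auto simp: \<sigma>_def)
    have D: "distributed M lborel (\<lambda>\<omega>. u \<bullet> \<xi> \<omega>) (normal_density 0 \<sigma>)"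
      using gaussian False var_nonneg by (simp add: gaussian_vec_def \<sigma>_def)
    have "(\<integral>x. normal_density 0 \<sigma> x * x ^ k \<partial>lborel) = gaussian_moment k (u \<bullet> (C *v u))"
    proof (cases "even k")
      case True
      then obtain j where "k = 2 * j" by (auto elim: evenE)
      then show ?thesis
        using integral_normal_moment_even[OF \<sigma>(1), of 0 j] \<sigma>
        by (simp add: gaussian_moment_def field_simps power_divide)
    next
      case False
      then obtain j where "k = 2 * j + 1" by (auto elim: oddE)
      then show ?thesis
        using integral_normal_moment_odd[OF \<sigma>(1), of 0 j] False by (simp add: gaussian_moment_def)
    qed
    then show ?thesis
      using distributed_integrable[OF D, of "\<lambda>x. x ^ k"] distributed_integral[OF D, of "\<lambda>x. x ^ k"]
        integrable_normal_moment[OF \<sigma>(1), of 0 k]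
      by simp
  qed
  then show "integrable M (\<lambda>\<omega>. (u \<bullet> \<xi> \<omega>) ^ k)"
    and "expectation (\<lambda>\<omega>. (u \<bullet> \<xi> \<omega>) ^ k) = gaussian_moment k (u \<bullet> (C *v u))"
    by auto
qed

lemma integrable_lf_monom: "integrable M (\<lambda>\<omega>. lf_monom us (\<xi> \<omega>))"
proof -
  have "integrable M (\<lambda>\<omega>. fdiff (\<lambda>w. (w \<bullet> \<xi> \<omega>) ^ length us) 0 us)"
    by (rule integrable_fdiff) (rule integrable_linear_form_power)
  then show ?thesis by (simp add: fact_mult_lf_monom[symmetric])
qed

lemma integrable_lf_eval: "integrable M (\<lambda>\<omega>. lf_eval P (\<xi> \<omega>))"
  by (induct P)
    (auto intro!: integrable_lf_monom Bochner_Integration.integrable_add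
      Bochner_Integration.integrable_mult_right)

lemma integrable_linear_form_mult_lf_eval: "integrable M (\<lambda>\<omega>. (v \<bullet> \<xi> \<omega>) * lf_eval P (\<xi> \<omega>))"
proof -
  have "lf_eval (lf_mult [(1, [v])] P) x = (v \<bullet> x) * lf_eval P x" for x
    by (simp only: lf_eval_mult) simp
  then show ?thesis using integrable_lf_eval[of "lf_mult [(1, [v])] P"] by simp
qed

lemma quadratic_form_add_scaled:
  "(w + t *\<^sub>R v) \<bullet> (C *v (w + t *\<^sub>R v))
     = w \<bullet> (C *v w) + t * (2 * (v \<bullet> (C *v w))) + t\<^sup>2 * (v \<bullet> (C *v v))"
  using inner_covariance_commute[of w v]
  by (simp add: matrix_vector_right_distrib matrix_vector_mult_scaleR inner_add_left inner_add_right
      power2_eq_square algebra_simps)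

lemma integrable_linear_form_powers: "integrable M (\<lambda>\<omega>. (v \<bullet> \<xi> \<omega>) ^ i * (w \<bullet> \<xi> \<omega>) ^ j)"
  using integrable_lf_monom[of "replicate i v @ replicate j w"] by simp

text \<open>The moment
  \<open>t \<mapsto> E ((w + t v) \<bullet> \<xi>)\<^bsup>m+1\<^esup>\<close> is a polynomial in \<open>t\<close> whose linear coefficient is
  \<open>(m + 1) E (v \<bullet> \<xi>) (w \<bullet> \<xi>)\<^sup>m\<close>; on the other hand it equals
  \<open>gaussian_moment (m + 1)\<close> of a quadratic in \<open>t\<close>, whose derivative at \<open>0\<close> is known.\<close>

lemma expectation_linear_form_mult_power:
  "expectation (\<lambda>\<omega>. (v \<bullet> \<xi> \<omega>) * (w \<bullet> \<xi> \<omega>) ^ m)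
     = of_nat m * (v \<bullet> (C *v w)) * gaussian_moment (m - 1) (w \<bullet> (C *v w))"
proof (cases m)
  case 0
  then show ?thesis
    using expectation_linear_form_power[of v 1] by (simp add: gaussian_moment_def)
next
  case (Suc k)
  define n where "n = Suc m"
  define c where "c i = of_nat (n choose i) * expectation (\<lambda>\<omega>. (v \<bullet> \<xi> \<omega>) ^ i * (w \<bullet> \<xi> \<omega>) ^ (n - i))" for i
  define q where "q t = w \<bullet> (C *v w) + t * (2 * (v \<bullet> (C *v w))) + t\<^sup>2 * (v \<bullet> (C *v v))" for t
  have poly: "(\<Sum>i\<le>n. c i * t ^ i) = gaussian_moment n (q t)" for t
  proof -
    have binomial: "((w + t *\<^sub>R v) \<bullet> x) ^ n
        = (\<Sum>i\<le>n. (of_nat (n choose i) * t ^ i) * ((v \<bullet> x) ^ i * (w \<bullet> x) ^ (n - i)))" for x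
      using binomial_ring[of "t * (v \<bullet> x)" "w \<bullet> x" n]
      by (simp add: inner_add_left add.commute power_mult_distrib mult_ac)
    have "gaussian_moment n (q t) = expectation (\<lambda>\<omega>. ((w + t *\<^sub>R v) \<bullet> \<xi> \<omega>) ^ n)"
      by (simp add: expectation_linear_form_power quadratic_form_add_scaled q_def)
    also have "\<dots> = (\<Sum>i\<le>n. c i * t ^ i)"
      unfolding binomial
      by (subst Bochner_Integration.integral_sum) (auto simp: c_def mult_ac integrable_linear_form_powers)
    finally show ?thesis by simp
  qed
  have "((\<lambda>t. \<Sum>i\<le>n. c i * t ^ i) has_real_derivative c 1) (at 0)"
    by (rule sum_power_has_real_derivative_0) (simp add: n_def)
  moreover have "(gaussian_moment n \<circ> q has_real_derivative
      real ((k + 2) * (k + 1)) / 2 * gaussian_moment k (q 0) * (2 * (v \<bullet> (C *v w)))) (at 0)"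
    unfolding n_def Suc q_def
    by (rule DERIV_chain[OF gaussian_moment_Suc_Suc_deriv]) (rule derivative_eq_intros refl | simp)+
  ultimately have "c 1 = real ((k + 2) * (k + 1)) / 2 * gaussian_moment k (q 0) * (2 * (v \<bullet> (C *v w)))"
    using DERIV_unique poly by (simp add: o_def)
  then have "real n * expectation (\<lambda>\<omega>. (v \<bullet> \<xi> \<omega>) * (w \<bullet> \<xi> \<omega>) ^ m)
      = real n * (of_nat m * (v \<bullet> (C *v w)) * gaussian_moment (m - 1) (w \<bullet> (C *v w)))"
    by (simp add: c_def n_def Suc q_def algebra_simps)
  moreover have "real n \<noteq> 0" by (simp add: n_def)
  ultimately show ?thesis by simp
qed

lemma expectation_linear_form_mult_lf_monom:
  "expectation (\<lambda>\<omega>. (v \<bullet> \<xi> \<omega>) * lf_monom us (\<xi> \<omega>))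
     = expectation (\<lambda>\<omega>. lf_eval (lf_monom_deriv (C *v v) us) (\<xi> \<omega>))"
proof (cases us)
  case Nil
  then show ?thesis using expectation_linear_form_mult_power[of v v 0] by simp
next
  case (Cons u0 us0)
  define k where "k = length us0"
  have m: "length us = Suc k" using Cons by (simp add: k_def)
  have pair: "expectation (\<lambda>\<omega>. (v \<bullet> \<xi> \<omega>) * (w \<bullet> \<xi> \<omega>) ^ Suc k)
      = of_nat (Suc k) * expectation (\<lambda>\<omega>. ((C *v v) \<bullet> w) * (w \<bullet> \<xi> \<omega>) ^ k)" for w
    using expectation_linear_form_mult_power[of v w "Suc k"] expectation_linear_form_power[of w k]
      inner_covariance_commute[of w v]
    by (simp add: inner_commute)
  have "fdiff (\<lambda>w. (v \<bullet> x) * (w \<bullet> x) ^ Suc k) 0 us = fact (Suc k) * ((v \<bullet> x) * lf_monom us x)" for x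
    using fact_mult_lf_monom[of us x] m by (simp add: fdiff_mult_left)
  then have "fact (Suc k) * expectation (\<lambda>\<omega>. (v \<bullet> \<xi> \<omega>) * lf_monom us (\<xi> \<omega>))
      = expectation (\<lambda>\<omega>. fdiff (\<lambda>w. (v \<bullet> \<xi> \<omega>) * (w \<bullet> \<xi> \<omega>) ^ Suc k) 0 us)"
    by simp
  also have "\<dots> = fdiff (\<lambda>w. expectation (\<lambda>\<omega>. (v \<bullet> \<xi> \<omega>) * (w \<bullet> \<xi> \<omega>) ^ Suc k)) 0 us"
    by (rule integral_fdiff) (rule integrable_linear_form_powers[of v 1, simplified])
  also have "\<dots> = of_nat (Suc k) * fdiff (\<lambda>w. expectation (\<lambda>\<omega>. ((C *v v) \<bullet> w) * (w \<bullet> \<xi> \<omega>) ^ k)) 0 us"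
    by (simp only: pair fdiff_mult_left)
  also have "\<dots> = of_nat (Suc k) * expectation (\<lambda>\<omega>. fdiff (\<lambda>w. ((C *v v) \<bullet> w) * (w \<bullet> \<xi> \<omega>) ^ k) 0 us)"
    by (rule arg_cong[where f = "(*) _"], rule integral_fdiff[symmetric]) (simp add: integrable_linear_form_power)
  also have "\<dots> = fact (Suc k) * expectation (\<lambda>\<omega>. lf_eval (lf_monom_deriv (C *v v) us) (\<xi> \<omega>))"
    by (simp add: fact_mult_lf_eval_monom_deriv[OF m, symmetric])
  finally show ?thesis by simp
qed

lemma expectation_linear_form_mult_lf_eval:
  "expectation (\<lambda>\<omega>. (v \<bullet> \<xi> \<omega>) * lf_eval P (\<xi> \<omega>))
     = expectation (\<lambda>\<omega>. lf_eval (lf_deriv (C *v v) P) (\<xi> \<omega>))"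
proof (induct P)
  case (Cons p P)
  obtain c us where p: "p = (c, us)" by force
  have "expectation (\<lambda>\<omega>. (v \<bullet> \<xi> \<omega>) * lf_eval (p # P) (\<xi> \<omega>))
      = c * expectation (\<lambda>\<omega>. (v \<bullet> \<xi> \<omega>) * lf_monom us (\<xi> \<omega>))
        + expectation (\<lambda>\<omega>. (v \<bullet> \<xi> \<omega>) * lf_eval P (\<xi> \<omega>))"
    using integrable_lf_monom[of "v # us"] integrable_linear_form_mult_lf_eval[of v P]
    by (simp add: p algebra_simps)
  also have "\<dots> = expectation (\<lambda>\<omega>. lf_eval (lf_deriv (C *v v) (p # P)) (\<xi> \<omega>))"
    using integrable_lf_eval[of "lf_monom_deriv (C *v v) us"] integrable_lf_eval[of "lf_deriv (C *v v) P"]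
    by (simp add: p Cons expectation_linear_form_mult_lf_monom lf_eval_deriv_Cons del: lf_deriv_simps)
  finally show ?case .
qed simp

lemma integrable_quadform_shift_power: "integrable M (\<lambda>\<omega>. (\<xi> \<omega> \<bullet> (A *v \<xi> \<omega>) - r) ^ k)"
  using integrable_lf_eval[of "lf_power (lf_quadform_shift A r) k"]
  by (simp add: lf_eval_quadform_shift)

lemma integrable_quadform_mult_quadform_shift_power:
  "integrable M (\<lambda>\<omega>. (\<xi> \<omega> \<bullet> (B *v \<xi> \<omega>)) * (\<xi> \<omega> \<bullet> (A *v \<xi> \<omega>) - r) ^ k)"
  using integrable_lf_eval[of "lf_mult (lf_quadform B) (lf_power (lf_quadform_shift A r) k)"]
  by (simp add: lf_eval_quadform lf_eval_quadform_shift)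

text \<open>Gaussian integration by parts in each coordinate \<open>\<xi>\<^sub>i\<close> of
  \<open>\<xi> \<bullet> (B *v \<xi>) = \<Sum>\<^sub>i \<xi>\<^sub>i (B $ i \<bullet> \<xi>)\<close>.\<close>

lemma expectation_quadform_mult_power:
  assumes "transpose A = A"
  shows "expectation (\<lambda>\<omega>. (\<xi> \<omega> \<bullet> (B *v \<xi> \<omega>)) * (\<xi> \<omega> \<bullet> (A *v \<xi> \<omega>) - r) ^ k)
     = trace (B ** C) * expectation (\<lambda>\<omega>. (\<xi> \<omega> \<bullet> (A *v \<xi> \<omega>) - r) ^ k)
       + 2 * of_nat k * expectation (\<lambda>\<omega>. (\<xi> \<omega> \<bullet> ((transpose B ** C ** A) *v \<xi> \<omega>))
           * (\<xi> \<omega> \<bullet> (A *v \<xi> \<omega>) - r) ^ (k - 1))"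
proof -
  define Q where "Q x = x \<bullet> (A *v x) - r" for x
  define g where "g i = lf_mult [(1, [B $ i])] (lf_power (lf_quadform_shift A r) k)" for i
  define h where "h i = C *v axis i 1" for i
  have lhs: "(x \<bullet> (B *v x)) * Q x ^ k = (\<Sum>i\<in>UNIV. (axis i 1 \<bullet> x) * lf_eval (g i) x)" for x
  proof -
    have "lf_eval (g i) x = (B $ i \<bullet> x) * Q x ^ k" for i
      by (simp add: g_def Q_def lf_eval_quadform_shift del: lf_mult_simps)
    moreover have "x \<bullet> (B *v x) = (\<Sum>i\<in>UNIV. x $ i * (B $ i \<bullet> x))"
      by (simp add: inner_vec_def matrix_vector_mult_component)
    ultimately show ?thesis by (simp add: inner_axis' sum_distrib_left mult_ac)
  qed
  have rhs: "(\<Sum>i\<in>UNIV. lf_eval (lf_deriv (h i) (g i)) x)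
      = trace (B ** C) * Q x ^ k + 2 * of_nat k * ((x \<bullet> ((transpose B ** C ** A) *v x)) * Q x ^ (k - 1))"
    for x
  proof -
    have cross: "(\<Sum>i\<in>UNIV. (B $ i \<bullet> x) * (h i \<bullet> (A *v x))) = x \<bullet> ((transpose B ** C ** A) *v x)"
      using sum_rows_mult_inner_columns[OF covariance_symmetric, of B x "A *v x"]
      by (simp add: h_def matrix_vector_mul_assoc)
    have "(\<Sum>i\<in>UNIV. lf_eval (lf_deriv (h i) (g i)) x)
        = (\<Sum>i\<in>UNIV. B $ i \<bullet> h i) * Q x ^ k
          + 2 * of_nat k * Q x ^ (k - 1) * (\<Sum>i\<in>UNIV. (B $ i \<bullet> x) * (h i \<bullet> (A *v x)))"
      by (simp add: g_def Q_def lf_eval_deriv_mult lf_eval_deriv_quadform_shift_power[OF assms]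
          lf_eval_quadform_shift sum.distrib sum_distrib_left sum_distrib_right mult_ac
          del: lf_mult_simps)
    then show ?thesis
      using trace_mult_eq_sum_rows[of B C] cross by (simp add: h_def mult_ac)
  qed
  have "expectation (\<lambda>\<omega>. (\<xi> \<omega> \<bullet> (B *v \<xi> \<omega>)) * Q (\<xi> \<omega>) ^ k)
      = (\<Sum>i\<in>UNIV. expectation (\<lambda>\<omega>. (axis i 1 \<bullet> \<xi> \<omega>) * lf_eval (g i) (\<xi> \<omega>)))"
    by (simp add: lhs integrable_linear_form_mult_lf_eval)
  also have "\<dots> = expectation (\<lambda>\<omega>. \<Sum>i\<in>UNIV. lf_eval (lf_deriv (h i) (g i)) (\<xi> \<omega>))"
    by (simp add: expectation_linear_form_mult_lf_eval h_def integrable_lf_eval)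
  also have "\<dots> = trace (B ** C) * expectation (\<lambda>\<omega>. Q (\<xi> \<omega>) ^ k)
      + 2 * of_nat k * expectation (\<lambda>\<omega>. (\<xi> \<omega> \<bullet> ((transpose B ** C ** A) *v \<xi> \<omega>)) * Q (\<xi> \<omega>) ^ (k - 1))"
    by (simp add: rhs Q_def integrable_quadform_shift_power integrable_quadform_mult_quadform_shift_power)
  finally show ?thesis by (simp add: Q_def)
qed

end

section \<open>The moment recursion\<close>

lemma mat_pow_Suc_right: "mat_pow M (Suc j) = mat_pow M j ** M"
proof (induct j)
  case (Suc j)
  have "mat_pow M (Suc (Suc j)) = M ** (mat_pow M j ** M)" using Suc by simp
  then show ?case by (simp add: matrix_mul_assoc)
qed simp

lemma transpose_mat_pow: "transpose (mat_pow M j) = mat_pow (transpose M) j"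
  by (induct j) (simp_all add: matrix_transpose_mul mat_pow_Suc_right[symmetric])

lemma mult_mat_pow_commute: "A ** mat_pow (C ** A) j = mat_pow (A ** C) j ** A"
proof (induct j)
  case (Suc j)
  have "A ** mat_pow (C ** A) (Suc j) = (A ** C) ** (A ** mat_pow (C ** A) j)"
    by (simp add: matrix_mul_assoc)
  also have "\<dots> = mat_pow (A ** C) (Suc j) ** A"
    by (simp add: Suc matrix_mul_assoc)
  finally show ?case .
qed simp

lemma trace_mat_pow_mult: "trace (mat_pow (A ** C) j ** A ** C) = R A C (Suc j)"
  unfolding R_def mat_pow_Suc_right by (simp only: matrix_mul_assoc)

lemma transpose_mat_pow_mult_step:
  assumes "transpose A = A" "transpose C = C"
  shows "transpose (mat_pow (A ** C) j ** A) ** C ** A = mat_pow (A ** C) (Suc j) ** A"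
proof -
  have "transpose (mat_pow (A ** C) j ** A) = mat_pow (A ** C) j ** A"
    using assms by (simp add: matrix_transpose_mul transpose_mat_pow mult_mat_pow_commute)
  then show ?thesis unfolding mat_pow_Suc_right by (simp only: matrix_mul_assoc)
qed

context centred_gaussian
begin

text \<open>Iterating the integration by parts: the matrices \<open>(AC)\<^sup>jA\<close> stay symmetric and
  \<open>(AC)\<^sup>jA C A = (AC)\<^sup>j\<^sup>+\<^sup>1A\<close>.\<close>

lemma expectation_mat_pow_quadform_mult_power:
  fixes r :: real
  assumes "transpose A = A"
  defines "\<mu> \<equiv> \<lambda>k. expectation (\<lambda>\<omega>. (\<xi> \<omega> \<bullet> (A *v \<xi> \<omega>) - r) ^ k)"
  shows "expectation (\<lambda>\<omega>. (\<xi> \<omega> \<bullet> ((mat_pow (A ** C) j ** A) *v \<xi> \<omega>)) * (\<xi> \<omega> \<bullet> (A *v \<xi> \<omega>) - r) ^ k)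
     = (\<Sum>i\<le>k. 2 ^ i * (fact k / fact (k - i)) * R A C (j + i + 1) * \<mu> (k - i))"
proof (induct k arbitrary: j)
  case 0
  show ?case
    using expectation_quadform_mult_power[OF assms(1), of "mat_pow (A ** C) j ** A" r 0]
    by (simp add: trace_mat_pow_mult \<mu>_def)
next
  case (Suc k)
  have "expectation (\<lambda>\<omega>. (\<xi> \<omega> \<bullet> ((mat_pow (A ** C) j ** A) *v \<xi> \<omega>)) * (\<xi> \<omega> \<bullet> (A *v \<xi> \<omega>) - r) ^ Suc k)
      = R A C (Suc j) * \<mu> (Suc k)
        + 2 * of_nat (Suc k) * (\<Sum>i\<le>k. 2 ^ i * (fact k / fact (k - i)) * R A C (Suc j + i + 1) * \<mu> (k - i))"
    using expectation_quadform_mult_power[OF assms(1), of "mat_pow (A ** C) j ** A" r "Suc k"] Suc[of "Suc j"]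
    by (simp add: trace_mat_pow_mult \<mu>_def transpose_mat_pow_mult_step[OF assms(1) covariance_symmetric])
  also have "\<dots> = (\<Sum>i\<le>Suc k. 2 ^ i * (fact (Suc k) / fact (Suc k - i)) * R A C (j + i + 1) * \<mu> (Suc k - i))"
  proof -
    have "(0::real) < fact k + fact k * real k" by (simp add: add_pos_nonneg)
    then show ?thesis by (subst sum.atMost_Suc_shift) (simp add: sum_distrib_left algebra_simps)
  qed
  finally show ?case .
qed

lemma moment_recursion:
  assumes "transpose A = A"
  defines "\<mu> \<equiv> \<lambda>k. expectation (\<lambda>\<omega>. (\<xi> \<omega> \<bullet> (A *v \<xi> \<omega>) - R A C 1) ^ k)"
  shows "\<mu> (Suc k) = (\<Sum>i<k. 2 ^ Suc i * (fact k / fact (k - Suc i)) * R A C (i + 2) * \<mu> (k - Suc i))"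
proof -
  have "\<mu> (Suc k) = expectation (\<lambda>\<omega>. (\<xi> \<omega> \<bullet> (A *v \<xi> \<omega>)) * (\<xi> \<omega> \<bullet> (A *v \<xi> \<omega>) - R A C 1) ^ k)
      - R A C 1 * \<mu> k"
    using integrable_quadform_shift_power[where A = A and r = "R A C 1" and k = k]
      integrable_quadform_mult_quadform_shift_power[where B = A and A = A and r = "R A C 1" and k = k]
    by (simp add: \<mu>_def algebra_simps)
  also have "\<dots> = (\<Sum>i\<le>k. 2 ^ i * (fact k / fact (k - i)) * R A C (i + 1) * \<mu> (k - i)) - R A C 1 * \<mu> k"
    using expectation_mat_pow_quadform_mult_power[OF assms(1), where r = "R A C 1" and j = 0 and k = k] by (simp add: \<mu>_def)
  also have "\<dots> = (\<Sum>i<k. 2 ^ Suc i * (fact k / fact (k - Suc i)) * R A C (i + 2) * \<mu> (k - Suc i))"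
    by (subst sum.atMost_shift) (simp add: numeral_2_eq_2)
  finally show ?thesis .
qed

end

section \<open>Compositions into parts of size at least two\<close>

definition compositions_ge2 :: "nat \<Rightarrow> nat list set" where
  "compositions_ge2 N = {k. (\<forall>x\<in>set k. 2 \<le> x) \<and> sum_list k = N}"

lemma length_le_compositions_ge2:
  assumes "k \<in> compositions_ge2 N"
  shows "length k \<le> N"
proof -
  have "\<forall>x\<in>set k. 2 \<le> x" using assms by (simp add: compositions_ge2_def)
  then have "length k \<le> sum_list k" by (induct k) auto
  then show ?thesis using assms by (simp add: compositions_ge2_def)
qed

lemma finite_compositions_ge2: "finite (compositions_ge2 N)"
proof (rule finite_subset[OF _ finite_lists_length_le[of "{..N}" N]])
  show "compositions_ge2 N \<subseteq> {xs. set xs \<subseteq> {..N} \<and> length xs \<le> N}"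
    using length_le_compositions_ge2 by (auto simp: compositions_ge2_def member_le_sum_list)
qed simp

lemma compositions_ge2_0: "compositions_ge2 0 = {[]}"
proof -
  have "k = []" if "\<forall>x\<in>set k. 2 \<le> x" "\<forall>x\<in>set k. x = 0" for k :: "nat list"
    using that by (cases k) auto
  then show ?thesis by (auto simp: compositions_ge2_def)
qed

lemma compositions_ge2_Suc:
  "compositions_ge2 (Suc n) = (\<lambda>(i, k). (i + 2) # k) ` (SIGMA i:{..<n}. compositions_ge2 (n - Suc i))"
proof (intro equalityI subsetI)
  fix x assume x: "x \<in> compositions_ge2 (Suc n)"
  then obtain j k where x_eq: "x = j # k" by (cases x) (auto simp: compositions_ge2_def)
  then have "2 \<le> j" "k \<in> compositions_ge2 (n - Suc (j - 2))" "j - 2 < n"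
    using x by (auto simp: compositions_ge2_def)
  then show "x \<in> (\<lambda>(i, k). (i + 2) # k) ` (SIGMA i:{..<n}. compositions_ge2 (n - Suc i))"
    using x_eq by (auto intro!: image_eqI[where x = "(j - 2, k)"])
qed (auto simp: compositions_ge2_def)

lemma cc_Cons:
  assumes "k \<in> compositions_ge2 n"
  shows "cc (j + n) (j # k) = fact (j + n - 1) / fact n * cc n k"
proof (cases k)
  case Nil
  then show ?thesis using assms by (simp add: cc_def compositions_ge2_def)
next
  case (Cons a k')
  have n: "1 \<le> n" and len: "1 \<le> length k" using assms Cons by (auto simp: compositions_ge2_def)
  define P where "P = (\<Prod>i\<in>{2..length k}. real n - real (psum k (i - 1)))"
  have "(\<Prod>i\<in>{2..length (j # k)}. real (j + n) - real (psum (j # k) (i - 1)))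
      = (\<Prod>i\<in>{1..length k}. real n - real (psum k (i - 1)))"
    using prod.shift_bounds_cl_Suc_ivl[of "\<lambda>i. real (j + n) - real (psum (j # k) (i - 1))" 1 "length k"]
    by (simp add: numeral_2_eq_2 psum_def take_Cons')
  also have "\<dots> = real n * P"
    unfolding P_def using len by (simp add: prod.atLeast_Suc_atMost numeral_2_eq_2 psum_def)
  finally have "cc (j + n) (j # k) = fact (j + n - 1) / (real n * P)"
    by (simp add: cc_def)
  moreover have "cc n k = fact (n - 1) / P" by (simp add: cc_def P_def)
  moreover have "fact n = real n * fact (n - 1)"
    using n by (simp add: fact_reduce)
  ultimately show ?thesis using n by simp
qed

text \<open>The right-hand side of the moment formula, for an arbitrary sequence \<open>\<rho>\<close> in place of
  \<open>R\<^sub>j\<close>, summed over all compositions of \<open>N\<close> into parts \<open>\<ge> 2\<close> at once.\<close>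

definition composition_sum :: "(nat \<Rightarrow> real) \<Rightarrow> nat \<Rightarrow> real" where
  "composition_sum \<rho> N =
     (\<Sum>k\<in>compositions_ge2 N. 2 ^ (N - length k) * (\<Prod>j<length k. \<rho> (k ! j)) * cc N k)"

lemma composition_sum_0: "composition_sum \<rho> 0 = 1"
  by (simp add: composition_sum_def compositions_ge2_0 cc_def)

lemma composition_sum_Suc:
  "composition_sum \<rho> (Suc n) =
     (\<Sum>i<n. 2 ^ Suc i * (fact n / fact (n - Suc i)) * \<rho> (i + 2) * composition_sum \<rho> (n - Suc i))"
proof -
  have inj: "inj_on (\<lambda>(i, k). (i + 2) # k) (SIGMA i:{..<n}. compositions_ge2 (n - Suc i))"
    by (auto simp: inj_on_def)
  have first_part: "2 ^ (Suc n - length ((i + 2) # k)) * (\<Prod>j<length ((i + 2) # k). \<rho> (((i + 2) # k) ! j))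
        * cc (Suc n) ((i + 2) # k)
      = 2 ^ Suc i * (fact n / fact (n - Suc i)) * \<rho> (i + 2)
        * (2 ^ (n - Suc i - length k) * (\<Prod>j<length k. \<rho> (k ! j)) * cc (n - Suc i) k)"
    if i: "i < n" and k: "k \<in> compositions_ge2 (n - Suc i)" for i k
  proof -
    have "Suc n - length ((i + 2) # k) = Suc i + (n - Suc i - length k)"
      using length_le_compositions_ge2[OF k] i by simp
    then have "(2::real) ^ (Suc n - length ((i + 2) # k)) = 2 ^ Suc i * 2 ^ (n - Suc i - length k)"
      by (simp only: power_add)
    moreover have "(\<Prod>j<length ((i + 2) # k). \<rho> (((i + 2) # k) ! j)) = \<rho> (i + 2) * (\<Prod>j<length k. \<rho> (k ! j))"
      by (simp only: length_Cons prod.lessThan_Suc_shift) simp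
    moreover have "cc (Suc n) ((i + 2) # k) = fact n / fact (n - Suc i) * cc (n - Suc i) k"
      using cc_Cons[OF k, of "i + 2"] i by simp
    ultimately show ?thesis by (simp only:) (simp add: mult_ac)
  qed
  have "composition_sum \<rho> (Suc n) = (\<Sum>i<n. \<Sum>k\<in>compositions_ge2 (n - Suc i).
      2 ^ (Suc n - length ((i + 2) # k)) * (\<Prod>j<length ((i + 2) # k). \<rho> (((i + 2) # k) ! j))
        * cc (Suc n) ((i + 2) # k))"
    unfolding composition_sum_def compositions_ge2_Suc sum.reindex[OF inj]
    by (simp add: sum.Sigma finite_compositions_ge2 split_def)
  also have "\<dots> = (\<Sum>i<n. \<Sum>k\<in>compositions_ge2 (n - Suc i). 2 ^ Suc i * (fact n / fact (n - Suc i))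
      * \<rho> (i + 2) * (2 ^ (n - Suc i - length k) * (\<Prod>j<length k. \<rho> (k ! j)) * cc (n - Suc i) k))"
    by (intro sum.cong refl first_part) auto
  also have "\<dots> = (\<Sum>i<n. 2 ^ Suc i * (fact n / fact (n - Suc i)) * \<rho> (i + 2) * composition_sum \<rho> (n - Suc i))"
    by (simp add: composition_sum_def sum_distrib_left)
  finally show ?thesis .
qed

lemma composition_sum_eq_sum_J0:
  assumes "N \<ge> 1"
  shows "(\<Sum>m=1..N. 2 ^ (N - m) * (\<Sum>k\<in>J0 m N. Rk A C k * cc N k)) = composition_sum (R A C) N"
proof -
  have union: "compositions_ge2 N = (\<Union>m\<in>{1..N}. J0 m N)"
  proof (intro equalityI subsetI)
    fix k assume k: "k \<in> compositions_ge2 N"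
    then have "k \<noteq> []" using assms by (auto simp: compositions_ge2_def)
    then show "k \<in> (\<Union>m\<in>{1..N}. J0 m N)"
      using k length_le_compositions_ge2[OF k]
      by (auto simp: J0_def compositions_ge2_def Suc_le_eq intro!: bexI[where x = "length k"])
  qed (auto simp: J0_def compositions_ge2_def)
  have "finite (J0 m N)" for m
    by (rule finite_subset[OF _ finite_compositions_ge2[of N]]) (auto simp: J0_def compositions_ge2_def)
  then have "composition_sum (R A C) N = (\<Sum>m=1..N. \<Sum>k\<in>J0 m N. 2 ^ (N - length k) * Rk A C k * cc N k)"
    unfolding composition_sum_def Rk_def union
    by (subst sum.UNION_disjoint) (auto simp: J0_def)
  also have "\<dots> = (\<Sum>m=1..N. 2 ^ (N - m) * (\<Sum>k\<in>J0 m N. Rk A C k * cc N k))"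
    by (intro sum.cong refl) (auto simp: sum_distrib_left J0_def mult_ac)
  finally show ?thesis by simp
qed

context centred_gaussian
begin

lemma moment_eq_composition_sum:
  assumes "transpose A = A"
  shows "expectation (\<lambda>\<omega>. (\<xi> \<omega> \<bullet> (A *v \<xi> \<omega>) - R A C 1) ^ n) = composition_sum (R A C) n"
proof (induct n rule: less_induct)
  case (less n)
  show ?case
  proof (cases n)
    case 0
    then show ?thesis by (simp add: composition_sum_0 prob_space)
  next
    case (Suc k)
    then have "expectation (\<lambda>\<omega>. (\<xi> \<omega> \<bullet> (A *v \<xi> \<omega>) - R A C 1) ^ n)
        = (\<Sum>i<k. 2 ^ Suc i * (fact k / fact (k - Suc i)) * R A C (i + 2)
            * expectation (\<lambda>\<omega>. (\<xi> \<omega> \<bullet> (A *v \<xi> \<omega>) - R A C 1) ^ (k - Suc i)))"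
      using moment_recursion[OF assms, of k] by simp
    also have "\<dots> = composition_sum (R A C) n"
      using less Suc by (simp add: composition_sum_Suc)
    finally show ?thesis .
  qed
qed

end

theorem lemmaL7:
  fixes A C :: "real^'n^'n" and M :: "'a measure" and \<xi> :: "'a \<Rightarrow> real^'n" and N :: nat
  assumes "transpose A = A"
    and "psd C"
    and "gaussian_vec M \<xi> C"
    and "N \<ge> 1"
  shows "prob_space.expectation M (\<lambda>\<omega>. (\<xi> \<omega> \<bullet> (A *v \<xi> \<omega>) - R A C 1) ^ N)
       = (\<Sum>m=1..N. 2 ^ (N - m) * (\<Sum>k\<in>J0 m N. Rk A C k * cc N k))"
proof -
  interpret centred_gaussian M \<xi> C
    using assms(2,3) by unfold_locales
  show ?thesis
    using moment_eq_composition_sum[OF assms(1)] composition_sum_eq_sum_J0[OF assms(4), of A C] by simp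
qed

end
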